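(* Let $\mathcal{X}$ be a sample space (e.g. $\mathbb{R}^d$), let $c:\mathcal{X}\times\mathcal{X}\to[0,\infty)$ be a cost function with $c(x,x)=0$ for all $x$, and let $\lambda>0$. Let $\mu,\mu_c,\nu$ be probability measures on $\mathcal{X}$, let $\epsilon\in[0,1)$ and set $\tilde\mu=(1-\epsilon)\mu+\epsilon\mu_c$. Then \[ \mathrm{ROBOT}(\tilde\mu,\nu)\le \min\Big\{\mathrm{OT}(\mu,\nu)+\lambda\,\epsilon\,\|\mu-\mu_c\|_{\mathrm{TV}},\ \ \lambda\|\tilde\mu-\nu\|_{\mathrm{TV}},\ \ \mathrm{OT}(\tilde\mu,\nu)\Big\}. \]
   Context: For probability measures $\mu,\nu$ on $\mathcal{X}$, $\mathrm{OT}(\mu,\nu)=\min_{\Pi}\mathbb{E}_{(X_1,X_2)\sim\Pi}[c(X_1,X_2)]$, the minimum over all couplings $\Pi$ of $\mu$ and $\nu$ (probability measures on $\mathcal{X}\times\mathcal{X}$ with marginals $\mu$ and $\nu$). For a signed measure $s$, the total-variation norm is $\|s\|_{\mathrm{TV}}=\int\frac12|s(\mathrm{d}x)|$. The robust optimal transport value is \[ \mathrm{ROBOT}(\mu,\nu)=\inf_{\pi,s}\ \iint c(x,y)\,\pi(\mathrm{d}x,\mathrm{d}y)+\lambda\|s\|_{\mathrm{TV}}, \] where the infimum is over signed measures $s$ on $\mathcal{X}$ with $\int s(\mathrm{d}x)=0$ and $\mu+s\ge 0$, and nonnegative measures $\pi$ on $\mathcal{X}\times\mathcal{X}$ whose first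 marginal is $\mu+s$ and whose second marginal is $\nu$. *)

theory Defs
  imports "HOL-Probability.Probability"
begin

definition signed_measure :: "'a measure \<Rightarrow> ('a set \<Rightarrow> real) \<Rightarrow> bool" where
  "signed_measure M s \<longleftrightarrow> s {} = 0 \<and>
     (\<forall>A. range A \<subseteq> sets M \<longrightarrow> disjoint_family A \<longrightarrow> (\<lambda>i. s (A i)) sums s (\<Union>i. A i))"

definition tv_norm :: "'a measure \<Rightarrow> ('a set \<Rightarrow> real) \<Rightarrow> ennreal" where
  "tv_norm M s = (SUP P \<in> {P. finite P \<and> P \<subseteq> sets M \<and> disjoint P \<and> \<Union>P = space M}.
                    ennreal (\<Sum>A\<in>P. \<bar>s A\<bar>)) / 2"

definition coupling :: "'a measure \<Rightarrow> 'a measure \<Rightarrow> 'a measure \<Rightarrow> ('a \<times> 'a) measure \<Rightarrow> bool" where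
  "coupling M \<mu> \<nu> \<pi> \<longleftrightarrow> sets \<pi> = sets (M \<Otimes>\<^sub>M M) \<and>
     (\<forall>A\<in>sets M. emeasure \<pi> (A \<times> space M) = emeasure \<mu> A) \<and>
     (\<forall>B\<in>sets M. emeasure \<pi> (space M \<times> B) = emeasure \<nu> B)"

definition OT :: "'a measure \<Rightarrow> ('a \<times> 'a \<Rightarrow> real) \<Rightarrow> 'a measure \<Rightarrow> 'a measure \<Rightarrow> ennreal" where
  "OT M c \<mu> \<nu> = (INF \<pi> \<in> {\<pi>. coupling M \<mu> \<nu> \<pi>}. \<integral>\<^sup>+ z. ennreal (c z) \<partial>\<pi>)"

definition ROBOT :: "'a measure \<Rightarrow> ('a \<times> 'a \<Rightarrow> real) \<Rightarrow> real \<Rightarrow> 'a measure \<Rightarrow> 'a measure \<Rightarrow> ennreal" where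
  "ROBOT M c lam \<mu> \<nu> =
    (INF (\<pi>, s) \<in> {(\<pi>, s). signed_measure M s \<and> s (space M) = 0 \<and>
         (\<forall>A\<in>sets M. 0 \<le> measure \<mu> A + s A) \<and>
         sets \<pi> = sets (M \<Otimes>\<^sub>M M) \<and>
         (\<forall>A\<in>sets M. emeasure \<pi> (A \<times> space M) = ennreal (measure \<mu> A + s A)) \<and>
         (\<forall>B\<in>sets M. emeasure \<pi> (space M \<times> B) = emeasure \<nu> B)}.
       (\<integral>\<^sup>+ z. ennreal (c z) \<partial>\<pi>) + ennreal lam * tv_norm M s)"

end

theory Submission
  imports Defs
begin

text \<open>A feasible pair of ROBOT is a signed correction s of the source together with a coupling of
  the corrected source with the target. Hence any correction s turning \<open>\<mu>t\<close> into a measure \<open>\<mu>'\<close>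
  gives \<open>ROBOT(\<mu>t, \<nu>) \<le> OT(\<mu>', \<nu>) + \<lambda> \<parallel>s\<parallel>\<close>. The three bounds come from \<open>s = \<epsilon> (\<mu> - \<mu>c)\<close>, which
  recovers \<mu>; from \<open>s = \<nu> - \<mu>t\<close>, where the diagonal coupling of \<nu> with itself costs nothing since c
  vanishes on the diagonal; and from \<open>s = 0\<close>.\<close>

lemma INF_ennreal_add_const_on:
  fixes f :: "'b \<Rightarrow> ennreal"
  shows "(INF i\<in>I. f i + c) = (INF i\<in>I. f i) + c"
proof (cases "I = {}")
  case False
  then show ?thesis
    using continuous_at_Inf_mono[of "\<lambda>x. x + c" "f ` I"]
      continuous_add[of "at_right (Inf (f ` I))" "\<lambda>x. x" "\<lambda>x. c"]
    by (auto simp: mono_def image_comp)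
qed simp

lemma tv_norm_zero: "tv_norm M (\<lambda>A. 0) = 0"
  unfolding tv_norm_def by (simp add: bot_ennreal[symmetric], simp add: bot_ennreal)

lemma tv_norm_minus_commute: "tv_norm M (\<lambda>A. f A - g A) = tv_norm M (\<lambda>A. g A - f A)"
  unfolding tv_norm_def by (simp add: abs_minus_commute)

lemma tv_norm_scale:
  assumes "0 \<le> a"
  shows "tv_norm M (\<lambda>A. a * s A) = ennreal a * tv_norm M s"
proof -
  have "ennreal (\<Sum>A\<in>P. \<bar>a * s A\<bar>) = ennreal a * ennreal (\<Sum>A\<in>P. \<bar>s A\<bar>)" for P
    using assms by (simp add: abs_mult sum_distrib_left[symmetric] ennreal_mult sum_nonneg)
  then show ?thesis
    unfolding tv_norm_def by (simp add: SUP_mult_left_ennreal ennreal_times_divide)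
qed

lemma signed_measure_zero: "signed_measure M (\<lambda>A. 0)"
  by (simp add: signed_measure_def)

lemma signed_measure_scale:
  assumes "signed_measure M s"
  shows "signed_measure M (\<lambda>A. a * s A)"
  using assms unfolding signed_measure_def by (auto intro: sums_mult)

lemma signed_measure_finite_measure_diff:
  assumes "finite_measure m1" "sets m1 = sets M" "finite_measure m2" "sets m2 = sets M"
  shows "signed_measure M (\<lambda>A. measure m1 A - measure m2 A)"
  unfolding signed_measure_def
proof safe
  fix A :: "nat \<Rightarrow> _" assume "range A \<subseteq> sets M" "disjoint_family A"
  then have "(\<lambda>i. measure m1 (A i)) sums measure m1 (\<Union>i. A i)"
    "(\<lambda>i. measure m2 (A i)) sums measure m2 (\<Union>i. A i)"
    using assms finite_measure.finite_measure_UNION by metis+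
  then show "(\<lambda>i. measure m1 (A i) - measure m2 (A i)) sums
      (measure m1 (\<Union>i. A i) - measure m2 (\<Union>i. A i))"
    by (rule sums_diff)
qed simp

lemma prob_space_mixture:
  assumes "prob_space \<mu>" "sets \<mu> = sets M" "prob_space \<mu>c" "sets \<mu>c = sets M"
    and "0 \<le> \<epsilon>" "\<epsilon> \<le> 1" "sets \<mu>t = sets M"
    and "emeasure \<mu>t (space M) = ennreal (1 - \<epsilon>) * emeasure \<mu> (space M) + ennreal \<epsilon> * emeasure \<mu>c (space M)"
  shows "prob_space \<mu>t"
proof
  have "emeasure \<mu> (space M) = 1" "emeasure \<mu>c (space M) = 1"
    using assms(1-4) by (metis prob_space.emeasure_space_1 sets_eq_imp_space_eq)+
  then have "emeasure \<mu>t (space M) = ennreal (1 - \<epsilon>) + ennreal \<epsilon>"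
    using assms(8) by simp
  also have "\<dots> = 1"
    using assms by (simp flip: ennreal_plus)
  finally show "emeasure \<mu>t (space \<mu>t) = 1"
    using assms sets_eq_imp_space_eq by metis
qed

lemma measure_mixture:
  assumes "finite_measure \<mu>" "finite_measure \<mu>c" "0 \<le> \<epsilon>" "\<epsilon> \<le> 1"
    and "emeasure \<mu>t A = ennreal (1 - \<epsilon>) * emeasure \<mu> A + ennreal \<epsilon> * emeasure \<mu>c A"
  shows "measure \<mu>t A = (1 - \<epsilon>) * measure \<mu> A + \<epsilon> * measure \<mu>c A"
proof -
  have "emeasure \<mu>t A = ennreal ((1 - \<epsilon>) * measure \<mu> A + \<epsilon> * measure \<mu>c A)"
    using assms by (simp add: finite_measure.emeasure_eq_measure ennreal_mult[symmetric]
        ennreal_plus[symmetric] del: ennreal_plus)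
  then show ?thesis
    using assms(3,4) unfolding measure_def[of \<mu>t] by (simp del: ennreal_plus)
qed

lemma ROBOT_le_feasible:
  assumes "signed_measure M s" "s (space M) = 0"
    and "\<forall>A\<in>sets M. 0 \<le> measure \<mu> A + s A"
    and "sets \<pi> = sets (M \<Otimes>\<^sub>M M)"
    and "\<forall>A\<in>sets M. emeasure \<pi> (A \<times> space M) = ennreal (measure \<mu> A + s A)"
    and "\<forall>B\<in>sets M. emeasure \<pi> (space M \<times> B) = emeasure \<nu> B"
  shows "ROBOT M c lam \<mu> \<nu> \<le> (\<integral>\<^sup>+ z. ennreal (c z) \<partial>\<pi>) + ennreal lam * tv_norm M s"
  unfolding ROBOT_def by (rule INF_lower2[of "(\<pi>, s)"]) (use assms in auto)

lemma ROBOT_le_OT_corrected: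
  assumes "signed_measure M s" "s (space M) = 0"
    and "finite_measure \<mu>'" "sets \<mu>' = sets M"
    and "\<And>A. A \<in> sets M \<Longrightarrow> measure \<mu> A + s A = measure \<mu>' A"
  shows "ROBOT M c lam \<mu> \<nu> \<le> OT M c \<mu>' \<nu> + ennreal lam * tv_norm M s"
proof -
  have "ROBOT M c lam \<mu> \<nu> \<le> (\<integral>\<^sup>+ z. ennreal (c z) \<partial>\<pi>) + ennreal lam * tv_norm M s"
    if "coupling M \<mu>' \<nu> \<pi>" for \<pi>
    using that assms
    by (intro ROBOT_le_feasible) (auto simp: coupling_def finite_measure.emeasure_eq_measure)
  then have "ROBOT M c lam \<mu> \<nu> \<le>
      (INF \<pi>\<in>{\<pi>. coupling M \<mu>' \<nu> \<pi>}. (\<integral>\<^sup>+ z. ennreal (c z) \<partial>\<pi>) + ennreal lam * tv_norm M s)"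
    by (intro INF_greatest) auto
  then show ?thesis
    unfolding OT_def INF_ennreal_add_const_on .
qed

lemma coupling_diagonal:
  assumes "sets \<nu> = sets M"
  shows "coupling M \<nu> \<nu> (distr \<nu> (M \<Otimes>\<^sub>M M) (\<lambda>x. (x, x)))"
proof -
  have diag: "(\<lambda>x. (x, x)) \<in> measurable \<nu> (M \<Otimes>\<^sub>M M)"
    using assms by (intro measurable_Pair) (auto simp: measurable_ident_sets)
  have space: "space \<nu> = space M"
    using assms by (rule sets_eq_imp_space_eq)
  have "(\<lambda>x. (x, x)) -` (A \<times> space M) \<inter> space \<nu> = A"
    "(\<lambda>x. (x, x)) -` (space M \<times> A) \<inter> space \<nu> = A" if "A \<in> sets M" for A
    using that sets.sets_into_space space by fastforce+
  then show ?thesis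
    using diag assms by (simp add: coupling_def emeasure_distr)
qed

lemma OT_self_eq_zero:
  assumes "sets \<nu> = sets M" "c \<in> borel_measurable (M \<Otimes>\<^sub>M M)" "\<And>x. c (x, x) = 0"
  shows "OT M c \<nu> \<nu> = 0"
proof -
  have "(\<integral>\<^sup>+ z. ennreal (c z) \<partial>distr \<nu> (M \<Otimes>\<^sub>M M) (\<lambda>x. (x, x))) = (\<integral>\<^sup>+ x. ennreal (c (x, x)) \<partial>\<nu>)"
    using assms by (intro nn_integral_distr) (auto intro: measurable_Pair simp: measurable_ident_sets)
  then have "OT M c \<nu> \<nu> \<le> 0"
    unfolding OT_def using coupling_diagonal[OF assms(1)] assms(3)
    by (intro INF_lower2[of "distr \<nu> (M \<Otimes>\<^sub>M M) (\<lambda>x. (x, x))"]) auto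
  then show ?thesis
    by simp
qed

theorem theorem1:
  fixes M :: "'a measure" and c :: "'a \<times> 'a \<Rightarrow> real" and lam \<epsilon> :: real
    and \<mu> \<mu>c \<nu> \<mu>t :: "'a measure"
  assumes c_meas: "c \<in> borel_measurable (M \<Otimes>\<^sub>M M)"
    and c_nonneg: "\<And>z. c z \<ge> 0"
    and c_diag: "\<And>x. c (x, x) = 0"
    and lam: "lam > 0"
    and P\<mu>: "prob_space \<mu>" "sets \<mu> = sets M"
    and P\<mu>c: "prob_space \<mu>c" "sets \<mu>c = sets M"
    and P\<nu>: "prob_space \<nu>" "sets \<nu> = sets M"
    and eps: "0 \<le> \<epsilon>" "\<epsilon> < 1"
    and mix_sets: "sets \<mu>t = sets M"
    and mix: "\<And>A. A \<in> sets M \<Longrightarrow>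
               emeasure \<mu>t A = ennreal (1 - \<epsilon>) * emeasure \<mu> A + ennreal \<epsilon> * emeasure \<mu>c A"
  shows "ROBOT M c lam \<mu>t \<nu> \<le>
           min (OT M c \<mu> \<nu> + ennreal (lam * \<epsilon>) * tv_norm M (\<lambda>A. measure \<mu> A - measure \<mu>c A))
               (min (ennreal lam * tv_norm M (\<lambda>A. measure \<mu>t A - measure \<nu> A))
                    (OT M c \<mu>t \<nu>))"
proof -
  have eps_le_1: "\<epsilon> \<le> 1"
    using eps(2) by simp
  have P\<mu>t: "prob_space \<mu>t"
    by (rule prob_space_mixture[OF P\<mu> P\<mu>c eps(1) eps_le_1 mix_sets mix[OF sets.top]])
  have finite: "finite_measure \<mu>" "finite_measure \<mu>c" "finite_measure \<nu>" "finite_measure \<mu>t"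
    using P\<mu>(1) P\<mu>c(1) P\<nu>(1) P\<mu>t by (simp_all add: prob_space.finite_measure)
  have total_mass: "measure m (space M) = 1" if "prob_space m" "sets m = sets M" for m
    using prob_space.prob_space[OF that(1)] sets_eq_imp_space_eq[OF that(2)] by simp
  have decontaminate: "measure \<mu>t A + \<epsilon> * (measure \<mu> A - measure \<mu>c A) = measure \<mu> A"
    if "A \<in> sets M" for A
    using measure_mixture[OF finite(1,2) eps(1) eps_le_1 mix[OF that]] by (simp add: algebra_simps)
  have "ROBOT M c lam \<mu>t \<nu> \<le>
      OT M c \<mu> \<nu> + ennreal lam * tv_norm M (\<lambda>A. \<epsilon> * (measure \<mu> A - measure \<mu>c A))"
    using total_mass[OF P\<mu>] total_mass[OF P\<mu>c]
    by (intro ROBOT_le_OT_corrected signed_measure_scale decontaminate finite(1) P\<mu>(2)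
        signed_measure_finite_measure_diff[OF finite(1) P\<mu>(2) finite(2) P\<mu>c(2)]) simp_all
  then have contaminated: "ROBOT M c lam \<mu>t \<nu> \<le>
      OT M c \<mu> \<nu> + ennreal (lam * \<epsilon>) * tv_norm M (\<lambda>A. measure \<mu> A - measure \<mu>c A)"
    using eps lam by (simp add: tv_norm_scale ennreal_mult mult.assoc)
  have "ROBOT M c lam \<mu>t \<nu> \<le>
      OT M c \<nu> \<nu> + ennreal lam * tv_norm M (\<lambda>A. measure \<nu> A - measure \<mu>t A)"
    using total_mass[OF P\<nu>] total_mass[OF P\<mu>t mix_sets]
    by (intro ROBOT_le_OT_corrected finite(3) P\<nu>(2)
        signed_measure_finite_measure_diff[OF finite(3) P\<nu>(2) finite(4) mix_sets]) simp_all
  then have total_variation: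
      "ROBOT M c lam \<mu>t \<nu> \<le> ennreal lam * tv_norm M (\<lambda>A. measure \<mu>t A - measure \<nu> A)"
    using OT_self_eq_zero[OF P\<nu>(2) c_meas c_diag] tv_norm_minus_commute[of M "measure \<mu>t" "measure \<nu>"]
    by simp
  have "ROBOT M c lam \<mu>t \<nu> \<le> OT M c \<mu>t \<nu> + ennreal lam * tv_norm M (\<lambda>A. 0)"
    by (intro ROBOT_le_OT_corrected signed_measure_zero finite(4) mix_sets) simp_all
  then have uncorrected: "ROBOT M c lam \<mu>t \<nu> \<le> OT M c \<mu>t \<nu>"
    by (simp add: tv_norm_zero)
  show ?thesis
    using contaminated total_variation uncorrected by simp
qed

end
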